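(* Let $T$ be an iso-unique zero forcing tree and let $\mathcal{P}$ be a minimum path cover of $T$. If $e=xy$ is a connector edge of $\mathcal{P}$, then either both $x$ and $y$ are interior connector vertices, or one of them is interior and the other is the only vertex of a path from $\mathcal{P}$.
   Context: Zero forcing: in a graph $G$, starting with an initial set $S\subseteq V(G)$ of active vertices, repeatedly apply the rule: if an active vertex $u$ has exactly one non-active neighbor $v$, then $v$ becomes active. $S$ is a zero forcing set if eventually all vertices become active; a minimum zero forcing set is one of minimum size. A graph is an iso-unique zero forcing graph if for every two minimum zero forcing sets $A,B$ there is an automorphism $\phi$ with $\phi(A)=B$. A path cover of a tree $T$ is a set of vertex-disjoint paths of $T$ (a single vertex counts as a path) covering all vertices of $T$; it is minimum if no path cover has fewer paths. For a path cover $\mathcal{P}$, an edge $xy$ with $x,y$ in different paths of $\mathcal{P}$ is a connector edge and $x,y$ are connector vertices; a connector vertex is interior if it is an interior (non-end) vertex of its path in $\mathcal{P}$. *)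

theory Defs
  imports Main
begin

definition graph :: "'a set \<Rightarrow> ('a \<Rightarrow> 'a \<Rightarrow> bool) \<Rightarrow> bool" where
  "graph V E \<longleftrightarrow> finite V \<and> (\<forall>x y. E x y \<longrightarrow> x \<in> V \<and> y \<in> V)
      \<and> (\<forall>x y. E x y \<longrightarrow> E y x) \<and> (\<forall>x. \<not> E x x)"

definition connected :: "'a set \<Rightarrow> ('a \<Rightarrow> 'a \<Rightarrow> bool) \<Rightarrow> bool" where
  "connected V E \<longleftrightarrow> (\<forall>x\<in>V. \<forall>y\<in>V. E\<^sup>*\<^sup>* x y)"

fun is_walk :: "('a \<Rightarrow> 'a \<Rightarrow> bool) \<Rightarrow> 'a list \<Rightarrow> bool" where
  "is_walk E [] = False"
| "is_walk E [x] = True"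
| "is_walk E (x # y # zs) = (E x y \<and> is_walk E (y # zs))"

definition is_path :: "'a set \<Rightarrow> ('a \<Rightarrow> 'a \<Rightarrow> bool) \<Rightarrow> 'a list \<Rightarrow> bool" where
  "is_path V E p \<longleftrightarrow> is_walk E p \<and> distinct p \<and> set p \<subseteq> V"

definition is_cycle :: "'a set \<Rightarrow> ('a \<Rightarrow> 'a \<Rightarrow> bool) \<Rightarrow> 'a list \<Rightarrow> bool" where
  "is_cycle V E c \<longleftrightarrow> is_path V E c \<and> length c \<ge> 3 \<and> E (last c) (hd c)"

definition tree :: "'a set \<Rightarrow> ('a \<Rightarrow> 'a \<Rightarrow> bool) \<Rightarrow> bool" where
  "tree V E \<longleftrightarrow> graph V E \<and> V \<noteq> {} \<and> connected V E \<and> (\<nexists>c. is_cycle V E c)"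

definition force_step :: "'a set \<Rightarrow> ('a \<Rightarrow> 'a \<Rightarrow> bool) \<Rightarrow> 'a set \<Rightarrow> 'a set \<Rightarrow> bool" where
  "force_step V E A B \<longleftrightarrow>
     (\<exists>u\<in>A. \<exists>v. {w \<in> V. E u w \<and> w \<notin> A} = {v} \<and> B = insert v A)"

definition zero_forcing_set :: "'a set \<Rightarrow> ('a \<Rightarrow> 'a \<Rightarrow> bool) \<Rightarrow> 'a set \<Rightarrow> bool" where
  "zero_forcing_set V E S \<longleftrightarrow> S \<subseteq> V \<and> (force_step V E)\<^sup>*\<^sup>* S V"

definition min_zero_forcing_set :: "'a set \<Rightarrow> ('a \<Rightarrow> 'a \<Rightarrow> bool) \<Rightarrow> 'a set \<Rightarrow> bool" where
  "min_zero_forcing_set V E S \<longleftrightarrow> zero_forcing_set V E S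
      \<and> (\<forall>S'. zero_forcing_set V E S' \<longrightarrow> card S \<le> card S')"

definition automorphism :: "'a set \<Rightarrow> ('a \<Rightarrow> 'a \<Rightarrow> bool) \<Rightarrow> ('a \<Rightarrow> 'a) \<Rightarrow> bool" where
  "automorphism V E \<phi> \<longleftrightarrow> bij_betw \<phi> V V \<and> (\<forall>x\<in>V. \<forall>y\<in>V. E x y \<longleftrightarrow> E (\<phi> x) (\<phi> y))"

definition iso_unique_zf :: "'a set \<Rightarrow> ('a \<Rightarrow> 'a \<Rightarrow> bool) \<Rightarrow> bool" where
  "iso_unique_zf V E \<longleftrightarrow> (\<forall>A B. min_zero_forcing_set V E A \<and> min_zero_forcing_set V E B
      \<longrightarrow> (\<exists>\<phi>. automorphism V E \<phi> \<and> \<phi> ` A = B))"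

definition path_cover :: "'a set \<Rightarrow> ('a \<Rightarrow> 'a \<Rightarrow> bool) \<Rightarrow> 'a list set \<Rightarrow> bool" where
  "path_cover V E P \<longleftrightarrow> (\<forall>p\<in>P. is_path V E p)
      \<and> (\<forall>p\<in>P. \<forall>q\<in>P. p \<noteq> q \<longrightarrow> set p \<inter> set q = {})
      \<and> (\<Union>p\<in>P. set p) = V"

definition min_path_cover :: "'a set \<Rightarrow> ('a \<Rightarrow> 'a \<Rightarrow> bool) \<Rightarrow> 'a list set \<Rightarrow> bool" where
  "min_path_cover V E P \<longleftrightarrow> path_cover V E P \<and> finite P
      \<and> (\<forall>Q. path_cover V E Q \<and> finite Q \<longrightarrow> card P \<le> card Q)"

definition interior :: "'a list \<Rightarrow> 'a \<Rightarrow> bool" where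
  "interior p x \<longleftrightarrow> x \<in> set p \<and> x \<noteq> hd p \<and> x \<noteq> last p"

end

theory Submission
  imports Defs
begin

text \<open>
  In a tree the heads of a minimum path cover form a minimum zero forcing set: the chains of
  forces of any zero forcing set form a path cover, and forcing from the heads cannot stall,
  because a stalled active set would yield an endless zigzag across the paths, that is an
  arbitrarily long non-backtracking walk, which in a tree is a path.
  Reversing one path of a minimum path cover gives another minimum path cover, so in an
  iso-unique tree the two head sets contain equally many leaves; hence both ends of a path of a
  minimum cover are leaves or neither is. Ends of two different paths are never adjacent, as
  the paths could be merged. Finally, if an end of a nontrivial path were adjacent to an
  interior vertex of another path q, rerouting along this edge and the leaf parity show that
  hd q is not a leaf; its extra neighbour is an interior vertex of a third path, and repeating
  the argument zigzags forever.
\<close>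

section \<open>Walks and paths\<close>

lemma is_walk_iff_nth:
  "is_walk E xs \<longleftrightarrow> xs \<noteq> [] \<and> (\<forall>i. Suc i < length xs \<longrightarrow> E (xs ! i) (xs ! Suc i))"
proof (induction E xs rule: is_walk.induct)
  case (3 E x y zs)
  have "(\<forall>i. Suc i < length (x # y # zs) \<longrightarrow> E ((x # y # zs) ! i) ((x # y # zs) ! Suc i))
      \<longleftrightarrow> E x y \<and> (\<forall>i. Suc i < length (y # zs) \<longrightarrow> E ((y # zs) ! i) ((y # zs) ! Suc i))"
    by (auto simp: nth_Cons split: nat.splits)
  then show ?case using "3" by simp
qed auto

lemma is_walk_nonempty: "is_walk E xs \<Longrightarrow> xs \<noteq> []"
  by auto

lemma is_walk_append:
  assumes "xs \<noteq> []" "ys \<noteq> []"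
  shows "is_walk E (xs @ ys) \<longleftrightarrow> is_walk E xs \<and> is_walk E ys \<and> E (last xs) (hd ys)"
  using assms
proof (induction xs)
  case (Cons x xs)
  then show ?case by (cases xs; cases ys) auto
qed simp

lemma is_walk_rev:
  assumes "symp E" "is_walk E xs"
  shows "is_walk E (rev xs)"
  using assms(2)
proof (induction xs)
  case (Cons x xs)
  then show ?case
    using assms(1) is_walk_append[of "rev xs" "[x]" E]
    by (cases xs) (auto simp: last_rev dest: sympD)
qed simp

lemma is_walk_take: "is_walk E xs \<Longrightarrow> 0 < n \<Longrightarrow> is_walk E (take n xs)"
  unfolding is_walk_iff_nth by auto

lemma is_walk_drop: "is_walk E xs \<Longrightarrow> n < length xs \<Longrightarrow> is_walk E (drop n xs)"
  unfolding is_walk_iff_nth by auto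

lemma graph_symp: "graph V E \<Longrightarrow> symp E"
  by (simp add: graph_def symp_def)

lemma graph_irrefl: "graph V E \<Longrightarrow> \<not> E x x"
  by (simp add: graph_def)

lemma graph_adj_in_vertices: "graph V E \<Longrightarrow> E x y \<Longrightarrow> x \<in> V \<and> y \<in> V"
  by (simp add: graph_def)

lemma is_path_nonempty: "is_path V E p \<Longrightarrow> p \<noteq> []"
  by (auto simp: is_path_def dest: is_walk_nonempty)

lemma is_path_mono: "is_path U E p \<Longrightarrow> U \<subseteq> W \<Longrightarrow> is_path W E p"
  by (auto simp: is_path_def)

lemma is_path_restrict: "is_path V E p \<Longrightarrow> set p \<subseteq> U \<Longrightarrow> is_path U E p"
  by (simp add: is_path_def)

lemma is_path_Cons:
  "is_path V E (u # s) \<longleftrightarrow> u \<in> V \<and> u \<notin> set s \<and> (s = [] \<or> is_path V E s \<and> E u (hd s))"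
  by (cases s) (auto simp: is_path_def)

lemma is_path_rev: "graph V E \<Longrightarrow> is_path V E p \<Longrightarrow> is_path V E (rev p)"
  by (auto simp: is_path_def is_walk_rev graph_symp)

lemma is_path_append:
  assumes "is_path V E p" "is_path V E q" "set p \<inter> set q = {}" "E (last p) (hd q)"
  shows "is_path V E (p @ q)"
  using assms is_walk_append[of p q E] by (auto simp: is_path_def dest: is_walk_nonempty)

lemma is_path_snoc:
  assumes "is_path V E p" "v \<in> V" "v \<notin> set p" "E (last p) v"
  shows "is_path V E (p @ [v])"
  using assms is_path_append[of V E p "[v]"] by (simp add: is_path_def)

lemma is_path_take: "is_path V E p \<Longrightarrow> 0 < n \<Longrightarrow> is_path V E (take n p)"
  by (auto simp: is_path_def is_walk_take dest: in_set_takeD)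

lemma is_path_drop: "is_path V E p \<Longrightarrow> n < length p \<Longrightarrow> is_path V E (drop n p)"
  by (auto simp: is_path_def is_walk_drop dest: in_set_dropD)

lemma is_path_infix:
  assumes "is_path V E p" "i \<le> k" "k < length p"
  shows "is_path V E (take (k - i + 1) (drop i p))"
  using assms by (intro is_path_take is_path_drop) auto

lemma is_path_last_adj:
  assumes "is_path V E p" "2 \<le> length p"
  shows "E (p ! (length p - 2)) (last p)"
proof -
  have "E (p ! (length p - 2)) (p ! Suc (length p - 2))"
    using assms is_walk_iff_nth[of E p] by (simp add: is_path_def)
  moreover have "Suc (length p - 2) = length p - 1" "last p = p ! (length p - 1)"
    using assms(2) by (simp, subst last_conv_nth) auto
  ultimately show ?thesis by simp
qed

lemma path_segment:
  assumes "graph V E" "is_path V E p" "a \<in> set p" "b \<in> set p" "a \<noteq> b"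
  obtains s where "is_path V E s" "hd s = a" "last s = b" "set s \<subseteq> set p" "2 \<le> length s"
proof -
  have forward: "\<exists>s. is_path V E s \<and> hd s = p ! i \<and> last s = p ! k \<and> set s \<subseteq> set p \<and> 2 \<le> length s"
    if "i < k" "k < length p" for i k
    using that is_path_infix[OF assms(2), of i k]
    by (intro exI[of _ "take (k - i + 1) (drop i p)"])
       (auto simp: hd_drop_conv_nth last_conv_nth dest: in_set_takeD in_set_dropD)
  obtain i k where ik: "i < length p" "p ! i = a" "k < length p" "p ! k = b"
    using assms(3,4) by (meson in_set_conv_nth)
  then have "i < k \<or> k < i" using assms(5) by (metis linorder_neqE_nat)
  then show thesis
  proof
    assume "i < k"
    then show thesis using forward[of i k] ik that by blast
  next
    assume "k < i"
    then obtain s where "is_path V E s" "hd s = b" "last s = a" "set s \<subseteq> set p" "2 \<le> length s"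
      using forward[of k i] ik by blast
    then show thesis
      using that[of "rev s"] is_path_rev[OF assms(1)] by (auto simp: hd_rev last_rev)
  qed
qed

lemma length_ge_2_if_not_singleton: "x \<in> set p \<Longrightarrow> p \<noteq> [x] \<Longrightarrow> 2 \<le> length p"
  by (cases p) (auto simp: Suc_le_eq)

lemma path_end_orient:
  assumes "graph V E" "is_path V E p" "x = hd p \<or> x = last p"
  obtains p' where "is_path V E p'" "set p' = set p" "last p' = x" "hd p' = hd p \<or> hd p' = last p"
proof (cases "x = last p")
  case True
  then show thesis using that assms(2) by blast
next
  case False
  have "p \<noteq> []" using assms(2) by (auto simp: is_path_def)
  then show thesis
    using that[of "rev p"] assms False is_path_rev[OF assms(1,2)] by (auto simp: hd_rev last_rev)
qed

section \<open>Paths in trees\<close>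

lemma tree_graph: "tree V E \<Longrightarrow> graph V E"
  by (simp add: tree_def)

lemma tree_no_chord:
  assumes "tree V E" "is_path V E p" "i + 2 \<le> k" "k < length p"
  shows "\<not> E (p ! i) (p ! k)"
proof
  assume chord: "E (p ! i) (p ! k)"
  let ?c = "take (k - i + 1) (drop i p)"
  have "hd ?c = p ! i" "last ?c = p ! k" "length ?c = k - i + 1"
    using assms(3,4) by (auto simp: hd_drop_conv_nth last_conv_nth)
  then have "is_cycle V E ?c"
    using is_path_infix[OF assms(2), of i k] assms(3,4) chord graph_symp[OF tree_graph[OF assms(1)]]
    by (auto simp: is_cycle_def dest: sympD)
  then show False using assms(1) by (simp add: tree_def)
qed

lemma tree_path_snoc_notin:
  assumes "tree V E" "is_path V E w" "2 \<le> length w" "E (last w) u" "u \<noteq> w ! (length w - 2)"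
  shows "u \<notin> set w"
proof
  assume "u \<in> set w"
  then obtain k where k: "k < length w" "w ! k = u" by (meson in_set_conv_nth)
  have last: "last w = w ! (length w - 1)" using assms(3) by (subst last_conv_nth) auto
  then have "k \<noteq> length w - 1" using k assms(4) graph_irrefl[OF tree_graph[OF assms(1)]] by auto
  then have "k + 2 \<le> length w - 1" using k assms(5) by (cases "k = length w - 2") auto
  moreover have "E (w ! k) (w ! (length w - 1))"
    using assms(4) k last graph_symp[OF tree_graph[OF assms(1)]] by (auto dest: sympD)
  moreover have "length w - 1 < length w" using assms(3) by simp
  ultimately show False using tree_no_chord[OF assms(1,2), of k "length w - 1"] by simp
qed

lemma tree_path_append:
  assumes "tree V E" "is_path V E w" "2 \<le> length w" "is_path V E s" "E (last w) (hd s)"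
    "last w \<notin> set s" "w ! (length w - 2) \<notin> set s"
  shows "is_path V E (w @ s)"
  using assms(2-7)
proof (induction s arbitrary: w)
  case (Cons u s)
  have u: "u \<in> V" "u \<notin> set s" and s: "s = [] \<or> is_path V E s \<and> E u (hd s)"
    using Cons.prems(3) unfolding is_path_Cons by auto
  have "u \<notin> set w" using tree_path_snoc_notin[OF assms(1) Cons.prems(1,2)] Cons.prems(4,6) by auto
  then have w': "is_path V E (w @ [u])"
    using is_path_snoc[OF Cons.prems(1) u(1)] Cons.prems(4) by simp
  show ?case
  proof (cases "s = []")
    case True
    then show ?thesis using w' by simp
  next
    case False
    have "(w @ [u]) ! (length (w @ [u]) - 2) = last w"
      using Cons.prems(2) by (cases w rule: rev_cases) (auto simp: nth_append)
    moreover have "2 \<le> length (w @ [u])" "last (w @ [u]) \<notin> set s" "last w \<notin> set s"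
      using Cons.prems(2,5) u(2) by auto
    ultimately have "is_path V E ((w @ [u]) @ s)"
      using Cons.IH[OF w'] False s by simp
    then show ?thesis by simp
  qed
qed simp

section \<open>Path covers\<close>

lemma path_cover_is_path: "path_cover V E C \<Longrightarrow> p \<in> C \<Longrightarrow> is_path V E p"
  by (simp add: path_cover_def)

lemma path_cover_disjoint:
  "path_cover V E C \<Longrightarrow> p \<in> C \<Longrightarrow> q \<in> C \<Longrightarrow> p \<noteq> q \<Longrightarrow> set p \<inter> set q = {}"
  by (simp add: path_cover_def)

lemma path_cover_covers:
  assumes "path_cover V E C" "v \<in> V"
  obtains p where "p \<in> C" "v \<in> set p"
  using assms by (auto simp: path_cover_def)

lemma path_cover_own_vertices: "is_path V E p \<Longrightarrow> path_cover (set p) E {p}"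
  by (simp add: path_cover_def is_path_restrict)

lemma path_cover_snoc:
  assumes "path_cover A E C" "c \<in> C" "v \<notin> A" "E (last c) v"
  shows "path_cover (insert v A) E (insert (c @ [v]) (C - {c}))"
  unfolding path_cover_def
proof (intro conjI ballI impI)
  have c: "is_path A E c" using path_cover_is_path[OF assms(1,2)] .
  have "v \<notin> set c" using c assms(3) by (auto simp: is_path_def)
  then have "is_path (insert v A) E (c @ [v])"
    using is_path_snoc[OF is_path_mono[OF c] _ _ assms(4)] by blast
  moreover have "is_path (insert v A) E p" if "p \<in> C" for p
    using is_path_mono[OF path_cover_is_path[OF assms(1) that]] by blast
  ultimately show "is_path (insert v A) E p" if "p \<in> insert (c @ [v]) (C - {c})" for p
    using that by blast
next
  have new: "set p \<inter> set (c @ [v]) = {}" if "p \<in> C - {c}" for p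
    using that assms(2,3) path_cover_disjoint[OF assms(1)] path_cover_is_path[OF assms(1)]
    by (auto simp: is_path_def)
  fix p q assume "p \<in> insert (c @ [v]) (C - {c})" "q \<in> insert (c @ [v]) (C - {c})" "p \<noteq> q"
  then consider "p = c @ [v]" "q \<in> C - {c}" | "q = c @ [v]" "p \<in> C - {c}" | "p \<in> C" "q \<in> C"
    by blast
  then show "set p \<inter> set q = {}"
  proof cases
    case 1
    then show ?thesis using new[of q] by blast
  next
    case 2
    then show ?thesis using new[of p] by blast
  next
    case 3
    then show ?thesis using path_cover_disjoint[OF assms(1)] \<open>p \<noteq> q\<close> by blast
  qed
next
  show "(\<Union>p\<in>insert (c @ [v]) (C - {c}). set p) = insert v A"
  proof -
    have "(\<Union>p\<in>C. set p) = A" using assms(1) by (simp add: path_cover_def)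
    moreover have "(\<Union>p\<in>C. set p) = set c \<union> (\<Union>p\<in>C - {c}. set p)"
      using assms(2) by (metis UN_insert insert_Diff)
    ultimately show ?thesis by simp
  qed
qed

lemma path_cover_hd_notin_others:
  assumes "path_cover V E C" "r \<in> C" "v \<in> set r"
  shows "v \<notin> hd ` (C - {r})"
proof
  assume "v \<in> hd ` (C - {r})"
  then obtain r' where "r' \<in> C" "r' \<noteq> r" "v = hd r'" by blast
  then show False
    using assms path_cover_disjoint[OF assms(1)] path_cover_is_path[OF assms(1)]
    by (metis disjoint_iff hd_in_set is_path_nonempty)
qed

lemma path_cover_inj_on_hd: "path_cover V E C \<Longrightarrow> inj_on hd C"
  by (rule inj_onI, rule ccontr)
     (metis path_cover_hd_notin_others path_cover_is_path is_path_nonempty hd_in_set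
       image_eqI insert_Diff insert_iff)

lemma path_cover_replace:
  assumes "path_cover V E C" "D \<subseteq> C" "path_cover (\<Union>d\<in>D. set d) E N"
  shows "path_cover V E (N \<union> (C - D))"
proof -
  have covered: "(\<Union>d\<in>D. set d) \<subseteq> V" using assms(1,2) by (auto simp: path_cover_def)
  have "set n \<inter> set c = {}" if "n \<in> N" "c \<in> C - D" for n c
  proof -
    have "set n \<subseteq> (\<Union>d\<in>D. set d)" using assms(3) that(1) by (auto simp: path_cover_def)
    moreover have "set d \<inter> set c = {}" if "d \<in> D" for d
      using path_cover_disjoint[OF assms(1)] assms(2) that \<open>c \<in> C - D\<close> by blast
    ultimately show ?thesis by blast
  qed
  moreover have "is_path V E n" if "n \<in> N" for n
    using assms(3) that is_path_mono[OF _ covered] by (simp add: path_cover_def)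
  ultimately show ?thesis
    using assms(1,2,3) unfolding path_cover_def by (auto 4 3 simp: Int_commute)
qed

text \<open>Each triple with \<open>G r a b\<close> contributes the segment from \<open>a\<close> to \<open>b\<close> of the path \<open>r\<close>.
  Consecutive segments lie on disjoint paths, so their concatenation never turns back, and in a
  tree such a walk is a path; following the triples forever would give a path longer than \<open>V\<close>.\<close>

lemma tree_path_cover_no_zigzag:
  assumes "tree V E" "path_cover V E C"
    and on_path: "\<And>r a b. G r a b \<Longrightarrow> r \<in> C \<and> a \<in> set r \<and> b \<in> set r \<and> a \<noteq> b"
    and continues: "\<And>r a b. G r a b \<Longrightarrow> \<exists>r' a' b'. G r' a' b' \<and> r' \<noteq> r \<and> E b a'"
    and "G r0 a0 b0"
  shows False
proof -
  have g: "graph V E" using assms(1) by (rule tree_graph)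
  have "\<exists>w r a b. G r a b \<and> is_path V E w \<and> n + 2 \<le> length w \<and> last w = b
          \<and> w ! (length w - 2) \<in> set r" for n
  proof (induction n)
    case 0
    obtain s where s: "is_path V E s" "last s = b0" "set s \<subseteq> set r0" "2 \<le> length s"
      using path_segment[OF g path_cover_is_path[OF assms(2)]] on_path[OF assms(5)] by metis
    then have "s ! (length s - 2) \<in> set r0" "0 + 2 \<le> length s" by (auto intro: nth_mem)
    then show ?case using s(1,2) assms(5) by blast
  next
    case (Suc n)
    then obtain w r a b where w: "G r a b" "is_path V E w" "n + 2 \<le> length w" "last w = b"
        "w ! (length w - 2) \<in> set r"
      by blast
    obtain r' a' b' where next_step: "G r' a' b'" "r' \<noteq> r" "E b a'"
      using continues[OF w(1)] by blast
    obtain s where s: "is_path V E s" "hd s = a'" "last s = b'" "set s \<subseteq> set r'" "2 \<le> length s"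
      using path_segment[OF g path_cover_is_path[OF assms(2)]] on_path[OF next_step(1)] by metis
    have "set r \<inter> set r' = {}"
      using path_cover_disjoint[OF assms(2)] on_path w(1) next_step(1,2) by blast
    then have "last w \<notin> set s" "w ! (length w - 2) \<notin> set s"
      using on_path[OF w(1)] w(4,5) s(4) by auto
    then have "is_path V E (w @ s)"
      using tree_path_append[OF assms(1) w(2) _ s(1)] w(3,4) s(2) next_step(3) by simp
    moreover have "(w @ s) ! (length (w @ s) - 2) \<in> set r'"
      using s(4,5) by (auto simp: nth_append intro: nth_mem)
    moreover have "Suc n + 2 \<le> length (w @ s)" "last (w @ s) = b'"
      using w(3) s(3,5) by (auto simp: last_append)
    ultimately show ?case using next_step(1) by blast
  qed
  then obtain w where w: "is_path V E w" "card V + 2 \<le> length w" by blast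
  have "length w = card (set w)" using w(1) by (simp add: is_path_def distinct_card)
  also have "\<dots> \<le> card V"
    using w(1) assms(1) by (intro card_mono) (auto simp: is_path_def tree_def graph_def)
  finally show False using w(2) by simp
qed

lemma card_replace_le:
  assumes "finite C" "D \<subseteq> C"
  shows "card (N \<union> (C - D)) + card D \<le> card N + card C"
proof -
  have "card (N \<union> (C - D)) \<le> card N + card (C - D)" by (rule card_Un_le)
  moreover have "card (C - D) + card D = card C"
    using assms by (metis card_Diff_subset card_mono finite_subset le_add_diff_inverse2)
  ultimately show ?thesis by linarith
qed

lemma min_path_cover_replace_card_le:
  assumes "min_path_cover V E C" "D \<subseteq> C" "path_cover (\<Union>d\<in>D. set d) E N" "finite N"
  shows "card D \<le> card N"
proof -
  have "card C \<le> card (N \<union> (C - D))"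
    using assms path_cover_replace unfolding min_path_cover_def by blast
  then show ?thesis using card_replace_le[of C D N] assms(1,2) by (simp add: min_path_cover_def)
qed

lemma min_path_cover_replace:
  assumes "min_path_cover V E C" "D \<subseteq> C" "path_cover (\<Union>d\<in>D. set d) E N" "finite N"
    "card N \<le> card D"
  shows "min_path_cover V E (N \<union> (C - D))"
proof -
  have "card (N \<union> (C - D)) \<le> card C"
    using card_replace_le[of C D N] assms(1,2,5) by (simp add: min_path_cover_def)
  then show ?thesis
    using assms path_cover_replace unfolding min_path_cover_def
    by (meson finite_Diff finite_UnI le_trans)
qed

lemma min_path_cover_rev:
  assumes "graph V E" "min_path_cover V E C" "r \<in> C"
  shows "min_path_cover V E (insert (rev r) (C - {r}))"
proof -
  have "is_path V E (rev r)"
    using assms path_cover_is_path is_path_rev unfolding min_path_cover_def by blast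
  then have "path_cover (\<Union>d\<in>{r}. set d) E {rev r}" using path_cover_own_vertices by fastforce
  then show ?thesis using min_path_cover_replace[OF assms(2), of "{r}" "{rev r}"] assms(3) by simp
qed

lemma min_path_cover_no_end_edge:
  assumes "graph V E" "min_path_cover V E C" "r1 \<in> C" "r2 \<in> C" "r1 \<noteq> r2"
    "u = hd r1 \<or> u = last r1" "v = hd r2 \<or> v = last r2" "E u v"
  shows False
proof -
  have pc: "path_cover V E C" and fin: "finite C" using assms(2) by (auto simp: min_path_cover_def)
  obtain a where a: "is_path V E a" "set a = set r1" "last a = u"
    using path_end_orient[OF assms(1) path_cover_is_path[OF pc assms(3)] assms(6)] by metis
  obtain b where b: "is_path V E b" "set b = set r2" "last b = v"
    using path_end_orient[OF assms(1) path_cover_is_path[OF pc assms(4)] assms(7)] by metis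
  have "is_path V E (a @ rev b)"
    using is_path_append[OF a(1) is_path_rev[OF assms(1) b(1)]] a b assms(8)
      path_cover_disjoint[OF pc assms(3-5)] is_path_nonempty[OF b(1)] by (simp add: hd_rev)
  moreover have "set (a @ rev b) = (\<Union>d\<in>{r1, r2}. set d)" using a(2) b(2) by simp
  ultimately have merged: "path_cover (\<Union>d\<in>{r1, r2}. set d) E {a @ rev b}"
    using path_cover_own_vertices by metis
  have "card {r1, r2} \<le> card {a @ rev b}"
    using min_path_cover_replace_card_le[OF assms(2) _ merged] assms(3,4) by simp
  then show False using assms(5) by simp
qed

lemma min_path_cover_reroute:
  assumes "graph V E" "min_path_cover V E P" "p \<in> P" "q \<in> P" "p \<noteq> q"
    "is_path V E p'" "set p' = set p" "0 < j" "j < length q" "E (last p') (q ! j)"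
  shows "min_path_cover V E ({p' @ drop j q, take j q} \<union> (P - {p, q}))"
proof -
  have pc: "path_cover V E P" using assms(2) by (simp add: min_path_cover_def)
  have q: "is_path V E q" and disj: "set p \<inter> set q = {}"
    using path_cover_is_path[OF pc assms(4)] path_cover_disjoint[OF pc assms(3-5)] .
  have split: "set (take j q) \<inter> set (drop j q) = {}" "set (take j q) \<union> set (drop j q) = set q"
    using q by (auto simp: is_path_def set_take_disj_set_drop_if_distinct simp flip: set_append)
  define extended where "extended = p' @ drop j q"
  define truncated where "truncated = take j q"
  have ext: "is_path V E extended" unfolding extended_def
    using is_path_append[OF assms(6) is_path_drop[OF q assms(9)]] assms(7,9,10) disj split
    by (auto simp: hd_drop_conv_nth)
  have trunc: "is_path V E truncated" unfolding truncated_def using is_path_take[OF q assms(8)] .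
  have parts: "set extended \<inter> set truncated = {}" "set extended \<union> set truncated = set p \<union> set q"
    unfolding extended_def truncated_def using assms(7) disj split by auto
  have "is_path (set p \<union> set q) E extended" "is_path (set p \<union> set q) E truncated"
    using is_path_restrict[OF ext] is_path_restrict[OF trunc] parts(2) by auto
  moreover have "extended \<noteq> truncated"
    using parts(1) is_path_nonempty[OF assms(6)] unfolding extended_def by auto
  ultimately have "path_cover (\<Union>d\<in>{p, q}. set d) E {extended, truncated}"
    using parts unfolding path_cover_def by auto
  moreover have "card {extended, truncated} \<le> card {p, q}"
    using assms(5) by (simp add: card_insert_if)
  ultimately have "min_path_cover V E ({extended, truncated} \<union> (P - {p, q}))"
    using min_path_cover_replace[OF assms(2), of "{p, q}"] assms(3,4) by blast
  then show ?thesis unfolding extended_def truncated_def .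
qed

lemma min_path_cover_extra_neighbour_of_hd:
  assumes "tree V E" "min_path_cover V E P" "q \<in> P" "2 \<le> length q" "E (hd q) w" "w \<noteq> q ! 1"
  obtains r where "r \<in> P" "r \<noteq> q" "interior r w"
proof -
  have pc: "path_cover V E P" using assms(2) by (simp add: min_path_cover_def)
  have g: "graph V E" using assms(1) by (rule tree_graph)
  obtain r where r: "r \<in> P" "w \<in> set r"
    using path_cover_covers[OF pc] graph_adj_in_vertices[OF g assms(5)] by blast
  have "r \<noteq> q"
  proof
    assume "r = q"
    then obtain k where k: "k < length q" "q ! k = w" using r(2) by (meson in_set_conv_nth)
    have hd: "hd q = q ! 0" using assms(4) by (cases q) auto
    have "k \<noteq> 0"
    proof
      assume "k = 0"
      then show False using k hd assms(5) graph_irrefl[OF g] by simp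
    qed
    then have "0 + 2 \<le> k" using k assms(6) by (cases "k = 1") auto
    then show False
      using tree_no_chord[OF assms(1) path_cover_is_path[OF pc assms(3)] _ k(1)] hd k(2) assms(5)
      by simp
  qed
  moreover have "w \<noteq> hd r" "w \<noteq> last r"
    using min_path_cover_no_end_edge[OF g assms(2,3) r(1) \<open>r \<noteq> q\<close>[symmetric], of "hd q" w] assms(5)
    by blast+
  then have "interior r w" using r(2) by (simp add: interior_def)
  ultimately show thesis using that r(1) by blast
qed

section \<open>Zero forcing and path covers\<close>

text \<open>The invariant of the forcing process: the chains of forces performed so far partition the
  active set, and a vertex that is not the end of its chain has already forced, so all its
  neighbours are active.\<close>

definition forcing_chains :: "'a set \<Rightarrow> ('a \<Rightarrow> 'a \<Rightarrow> bool) \<Rightarrow> 'a set \<Rightarrow> 'a list set \<Rightarrow> bool" where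
  "forcing_chains V E A Ch \<longleftrightarrow> path_cover A E Ch \<and> finite Ch
      \<and> (\<forall>c\<in>Ch. \<forall>u\<in>set c. u \<noteq> last c \<longrightarrow> (\<forall>w. E u w \<longrightarrow> w \<in> A))"

lemma forcing_chains_init:
  assumes "S \<subseteq> V" "finite S"
  shows "forcing_chains V E S ((\<lambda>s. [s]) ` S) \<and> card ((\<lambda>s. [s]) ` S) \<le> card S"
  using assms by (auto simp: forcing_chains_def path_cover_def is_path_def card_image_le)

lemma forcing_chains_force_step:
  assumes "graph V E" "forcing_chains V E A Ch" "force_step V E A B"
  obtains Ch' where "forcing_chains V E B Ch'" "card Ch' \<le> card Ch"
proof -
  obtain u v where u: "u \<in> A" and forced: "{w \<in> V. E u w \<and> w \<notin> A} = {v}" and B: "B = insert v A"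
    using assms(3) unfolding force_step_def by blast
  have v: "E u v" "v \<notin> A" using forced by auto
  have only_v: "w \<in> B" if "E u w" for w
  proof -
    have "w \<in> V" using graph_adj_in_vertices[OF assms(1) that] ..
    then show ?thesis using forced that unfolding B by blast
  qed
  have pc: "path_cover A E Ch" and fin: "finite Ch"
    using assms(2) by (simp_all add: forcing_chains_def)
  have closed: "w \<in> A" if "c \<in> Ch" "x \<in> set c" "x \<noteq> last c" "E x w" for c x w
    using assms(2) that unfolding forcing_chains_def by blast
  obtain c where c: "c \<in> Ch" "u \<in> set c" using path_cover_covers[OF pc u] by blast
  have last: "last c = u" using closed[OF c _ v(1)] v(2) by blast
  define Ch' where "Ch' = insert (c @ [v]) (Ch - {c})"
  have "path_cover B E Ch'" unfolding Ch'_def B using path_cover_snoc[OF pc c(1) v(2)] last v(1)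
    by simp
  moreover have "w \<in> B" if "c' \<in> Ch'" "x \<in> set c'" "x \<noteq> last c'" "E x w" for c' x w
  proof (cases "c' = c @ [v]")
    case True
    then have "x \<in> set c" using that(2,3) by auto
    then show ?thesis using closed[OF c(1) _ _ that(4)] only_v that(4) last unfolding B by blast
  next
    case False
    then have "c' \<in> Ch" "last c' \<noteq> x" using that(1,3) unfolding Ch'_def by auto
    then show ?thesis using closed that(2,4) unfolding B by blast
  qed
  moreover have "finite Ch'" unfolding Ch'_def using fin by simp
  moreover have "card Ch' \<le> card Ch"
  proof -
    have "card Ch' \<le> Suc (card (Ch - {c}))" unfolding Ch'_def using fin
      by (simp add: card_insert_if)
    also have "\<dots> = card Ch" using card_Suc_Diff1[OF fin c(1)] .
    finally show ?thesis .
  qed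
  ultimately show thesis using that unfolding forcing_chains_def by blast
qed

lemma zero_forcing_set_forcing_chains:
  assumes "graph V E" "zero_forcing_set V E S"
  obtains Ch where "path_cover V E Ch" "finite Ch" "card Ch \<le> card S"
proof -
  have S: "S \<subseteq> V" "(force_step V E)\<^sup>*\<^sup>* S V" using assms(2) by (simp_all add: zero_forcing_set_def)
  have "finite S" using S(1) assms(1) finite_subset by (auto simp: graph_def)
  have "\<exists>Ch. forcing_chains V E A Ch \<and> card Ch \<le> card S" if "(force_step V E)\<^sup>*\<^sup>* S A" for A
    using that
  proof (induction rule: rtranclp_induct)
    case base
    show ?case using forcing_chains_init[OF S(1) \<open>finite S\<close>] by blast
  next
    case (step A B)
    then obtain Ch where Ch: "forcing_chains V E A Ch" "card Ch \<le> card S" by blast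
    obtain Ch' where "forcing_chains V E B Ch'" "card Ch' \<le> card Ch"
      using forcing_chains_force_step[OF assms(1) Ch(1) step.hyps(2)] .
    then show ?case using Ch(2) by (intro exI[of _ Ch']) simp
  qed
  then obtain Ch where "forcing_chains V E V Ch" "card Ch \<le> card S" using S(2) by blast
  then show thesis using that unfolding forcing_chains_def by blast
qed

lemma min_path_cover_card_le_zero_forcing_set:
  assumes "graph V E" "min_path_cover V E P" "zero_forcing_set V E S"
  shows "card P \<le> card S"
proof -
  obtain Ch where "path_cover V E Ch" "finite Ch" "card Ch \<le> card S"
    using zero_forcing_set_forcing_chains[OF assms(1,3)] .
  moreover from this have "card P \<le> card Ch" using assms(2) by (simp add: min_path_cover_def)
  ultimately show ?thesis by simp
qed

lemma force_step_insert:
  assumes "force_step V E A B"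
  obtains v where "v \<in> V" "v \<notin> A" "B = insert v A"
  using assms unfolding force_step_def by blast

lemma force_rtranclp_between:
  assumes "(force_step V E)\<^sup>*\<^sup>* S A" "S \<subseteq> V"
  shows "S \<subseteq> A \<and> A \<subseteq> V"
  using assms(1) by induction (use assms(2) in \<open>auto elim: force_step_insert\<close>)

lemma force_reaches_stalled:
  assumes "finite V" "S \<subseteq> V"
  obtains A where "(force_step V E)\<^sup>*\<^sup>* S A" "\<And>B. \<not> force_step V E A B"
proof -
  have "\<forall>A. (force_step V E)\<^sup>*\<^sup>* S A \<longrightarrow> card A < Suc (card V)"
    using force_rtranclp_between[OF _ assms(2)] card_mono[OF assms(1)]
    by (simp add: le_imp_less_Suc)
  then obtain A where A: "(force_step V E)\<^sup>*\<^sup>* S A"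
    and greatest: "\<And>B. (force_step V E)\<^sup>*\<^sup>* S B \<Longrightarrow> card B \<le> card A"
    using ex_has_greatest_nat[of "(force_step V E)\<^sup>*\<^sup>* S" S card] by blast
  have "\<not> force_step V E A B" for B
  proof
    assume step: "force_step V E A B"
    then obtain v where "v \<notin> A" "B = insert v A" by (rule force_step_insert)
    moreover have "finite A"
      using force_rtranclp_between[OF A assms(2)] assms(1) finite_subset by blast
    ultimately have "card B = Suc (card A)" by simp
    then show False using greatest[OF rtranclp.rtrancl_into_rtrancl[OF A step]] by simp
  qed
  then show thesis using that A by blast
qed

lemma ex_last_before_first_notin:
  assumes "hd xs \<in> A" "x \<in> set xs" "x \<notin> A"
  obtains i where "Suc i < length xs" "\<forall>j\<le>i. xs ! j \<in> A" "xs ! Suc i \<notin> A"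
proof -
  define k where "k = length (takeWhile (\<lambda>y. y \<in> A) xs)"
  have "k < length xs"
    unfolding k_def
    using assms(2,3) by (metis takeWhile_eq_all_conv takeWhile_eq_take take_all not_less)
  then have "xs ! k \<notin> A" unfolding k_def by (rule nth_length_takeWhile)
  have "k \<noteq> 0" unfolding k_def using assms(1,2) by (cases xs) auto
  have "xs ! j \<in> A" if "j \<le> k - 1" for j
  proof -
    have "j < length (takeWhile (\<lambda>y. y \<in> A) xs)" using that \<open>k \<noteq> 0\<close> unfolding k_def by linarith
    then show ?thesis using takeWhile_nth nth_mem set_takeWhileD by metis
  qed
  then show thesis using that[of "k - 1"] \<open>k < length xs\<close> \<open>xs ! k \<notin> A\<close> \<open>k \<noteq> 0\<close> by simp
qed

lemma tree_stalled_superset_of_heads_eq: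
  assumes "tree V E" "path_cover V E C" "hd ` C \<subseteq> A" "A \<subseteq> V" "\<And>B. \<not> force_step V E A B"
  shows "A = V"
proof (rule ccontr)
  assume "A \<noteq> V"
  then obtain v0 where v0: "v0 \<in> V" "v0 \<notin> A" using assms(4) by blast
  obtain r0 where r0: "r0 \<in> C" "v0 \<in> set r0" using path_cover_covers[OF assms(2) v0(1)] .
  txt \<open>\<open>b\<close> is the last vertex of the active initial segment of \<open>r\<close>. It cannot force its successor
    on \<open>r\<close>, so it has a second inactive neighbour, which lies on another path since a path in a
    tree has no chords.\<close>
  define G where "G r a b \<longleftrightarrow> r \<in> C \<and> a \<in> set r \<and> a \<notin> A \<and>
      (\<exists>i. Suc i < length r \<and> b = r ! i \<and> (\<forall>j\<le>i. r ! j \<in> A) \<and> r ! Suc i \<notin> A)" for r a b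
  have start: "\<exists>b. G r a b" if r: "r \<in> C" and a: "a \<in> set r" "a \<notin> A" for r a
  proof -
    have "hd r \<in> A" using assms(3) r by blast
    then obtain i where "Suc i < length r" "\<forall>j\<le>i. r ! j \<in> A" "r ! Suc i \<notin> A"
      using ex_last_before_first_notin a by metis
    then show ?thesis unfolding G_def using r a by blast
  qed
  show False
  proof (rule tree_path_cover_no_zigzag[OF assms(1,2)])
    fix r a b assume "G r a b"
    then show "r \<in> C \<and> a \<in> set r \<and> b \<in> set r \<and> a \<noteq> b" unfolding G_def by auto
  next
    fix r a b assume "G r a b"
    then obtain i where r: "r \<in> C" and i: "Suc i < length r" "b = r ! i" "\<forall>j\<le>i. r ! j \<in> A"
      "r ! Suc i \<notin> A"
      unfolding G_def by blast
    have path: "is_path V E r" using path_cover_is_path[OF assms(2) r] .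
    have "E b (r ! Suc i)" "r ! Suc i \<in> V"
      using path i(1,2) nth_mem[OF i(1)] unfolding is_path_def is_walk_iff_nth by auto
    moreover have "{w \<in> V. E b w \<and> w \<notin> A} \<noteq> {r ! Suc i}"
      using assms(5)[of "insert (r ! Suc i) A"] i(2,3) unfolding force_step_def by blast
    ultimately obtain t where t: "t \<in> V" "E b t" "t \<notin> A" "t \<noteq> r ! Suc i"
      using i(4) by blast
    obtain r' where r': "r' \<in> C" "t \<in> set r'" using path_cover_covers[OF assms(2) t(1)] .
    have "r' \<noteq> r"
    proof
      assume "r' = r"
      then obtain k where k: "k < length r" "r ! k = t" using r'(2) by (meson in_set_conv_nth)
      have "\<not> k \<le> i" "k \<noteq> Suc i" using i(3) t(3,4) k(2) by auto
      then have "i + 2 \<le> k" by linarith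
      then show False using tree_no_chord[OF assms(1) path _ k(1)] i(2) k(2) t(2) by simp
    qed
    then show "\<exists>r' a' b'. G r' a' b' \<and> r' \<noteq> r \<and> E b a'" using start[OF r' t(3)] t(2) by blast
  next
    show "G r0 v0 (SOME b. G r0 v0 b)" using start[OF r0 v0(2)] by (rule someI_ex)
  qed
qed

lemma tree_zero_forcing_set_hd:
  assumes "tree V E" "path_cover V E C"
  shows "zero_forcing_set V E (hd ` C)"
proof -
  have "hd p \<in> V" if "p \<in> C" for p
    using path_cover_is_path[OF assms(2) that] hd_in_set[OF is_path_nonempty]
    by (auto simp: is_path_def)
  then have heads: "hd ` C \<subseteq> V" by blast
  obtain A where A: "(force_step V E)\<^sup>*\<^sup>* (hd ` C) A" "\<And>B. \<not> force_step V E A B"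
    using force_reaches_stalled[OF _ heads] assms(1) by (auto simp: tree_def graph_def)
  have "A = V"
    using tree_stalled_superset_of_heads_eq[OF assms _ _ A(2)] force_rtranclp_between[OF A(1) heads]
    by blast
  then show ?thesis using A(1) heads by (simp add: zero_forcing_set_def)
qed

lemma tree_min_zero_forcing_set_hd:
  assumes "tree V E" "min_path_cover V E C"
  shows "min_zero_forcing_set V E (hd ` C)"
proof -
  have pc: "path_cover V E C" using assms(2) by (simp add: min_path_cover_def)
  have "card (hd ` C) = card C" using path_cover_inj_on_hd[OF pc] by (rule card_image)
  then show ?thesis
    using tree_zero_forcing_set_hd[OF assms(1) pc] assms
      min_path_cover_card_le_zero_forcing_set[OF tree_graph[OF assms(1)]]
    unfolding min_zero_forcing_set_def by simp
qed

section \<open>Leaves and iso-unique zero forcing\<close>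

definition leaf :: "('a \<Rightarrow> 'a \<Rightarrow> bool) \<Rightarrow> 'a \<Rightarrow> bool" where
  "leaf E v \<longleftrightarrow> card {w. E v w} = 1"

lemma not_leaf_if_two_neighbours: "E x y \<Longrightarrow> E x z \<Longrightarrow> y \<noteq> z \<Longrightarrow> \<not> leaf E x"
  unfolding leaf_def by (metis card_1_singletonE mem_Collect_eq singletonD)

lemma other_neighbour_if_not_leaf:
  assumes "\<not> leaf E x" "E x y"
  obtains z where "E x z" "z \<noteq> y"
proof -
  have "{w. E x w} \<noteq> {y}" using assms(1) unfolding leaf_def by auto
  then show thesis using assms(2) that by blast
qed

lemma automorphism_image_neighbours:
  assumes "graph V E" "automorphism V E \<phi>" "v \<in> V"
  shows "\<phi> ` {w. E v w} = {w. E (\<phi> v) w}"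
proof -
  have onto: "\<phi> ` V = V" and adj: "\<And>x y. x \<in> V \<Longrightarrow> y \<in> V \<Longrightarrow> E x y \<longleftrightarrow> E (\<phi> x) (\<phi> y)"
    using assms(2) unfolding automorphism_def bij_betw_def by blast+
  show ?thesis
  proof
    show "\<phi> ` {w. E v w} \<subseteq> {w. E (\<phi> v) w}"
      using adj[OF assms(3)] graph_adj_in_vertices[OF assms(1)] by blast
    show "{w. E (\<phi> v) w} \<subseteq> \<phi> ` {w. E v w}"
    proof
      fix z assume "z \<in> {w. E (\<phi> v) w}"
      moreover obtain w where "w \<in> V" "z = \<phi> w"
        using graph_adj_in_vertices[OF assms(1)] calculation onto by blast
      ultimately show "z \<in> \<phi> ` {w. E v w}" using adj[OF assms(3)] by auto
    qed
  qed
qed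

lemma automorphism_leaf_iff:
  assumes "graph V E" "automorphism V E \<phi>" "v \<in> V"
  shows "leaf E (\<phi> v) \<longleftrightarrow> leaf E v"
proof -
  have "inj_on \<phi> {w. E v w}"
    using assms(2) graph_adj_in_vertices[OF assms(1)] unfolding automorphism_def bij_betw_def
    by (blast intro: inj_on_subset)
  then show ?thesis
    unfolding leaf_def automorphism_image_neighbours[OF assms, symmetric] by (simp add: card_image)
qed

lemma iso_unique_zf_card_leaves:
  assumes "graph V E" "iso_unique_zf V E" "min_zero_forcing_set V E A" "min_zero_forcing_set V E B"
  shows "card {a \<in> A. leaf E a} = card {b \<in> B. leaf E b}"
proof -
  obtain \<phi> where \<phi>: "automorphism V E \<phi>" "\<phi> ` A = B"
    using assms(2-4) unfolding iso_unique_zf_def by blast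
  have A: "A \<subseteq> V" using assms(3) by (simp add: min_zero_forcing_set_def zero_forcing_set_def)
  have "\<phi> ` {a \<in> A. leaf E a} = {b \<in> B. leaf E b}"
    using automorphism_leaf_iff[OF assms(1) \<phi>(1)] A \<phi>(2) by auto
  moreover have "inj_on \<phi> {a \<in> A. leaf E a}"
    using \<phi>(1) A unfolding automorphism_def bij_betw_def by (blast intro: inj_on_subset)
  ultimately show ?thesis by (metis card_image)
qed

lemma card_Collect_insert:
  assumes "finite S" "a \<notin> S"
  shows "card {x \<in> insert a S. P x} = card {x \<in> S. P x} + (if P a then 1 else 0)"
proof -
  have "{x \<in> insert a S. P x} = (if P a then insert a {x \<in> S. P x} else {x \<in> S. P x})" by auto
  then show ?thesis using assms by simp
qed

lemma iso_unique_leaf_hd_iff_leaf_last: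
  assumes "tree V E" "iso_unique_zf V E" "min_path_cover V E C" "r \<in> C"
  shows "leaf E (hd r) \<longleftrightarrow> leaf E (last r)"
proof -
  have g: "graph V E" using assms(1) by (rule tree_graph)
  have pc: "path_cover V E C" and fin: "finite C"
    using assms(3) by (simp_all add: min_path_cover_def)
  let ?others = "hd ` (C - {r})"
  have r: "r \<noteq> []" using is_path_nonempty[OF path_cover_is_path[OF pc assms(4)]] .
  have heads: "hd ` C = insert (hd r) ?others"
    and heads_rev: "hd ` insert (rev r) (C - {r}) = insert (last r) ?others"
    using assms(4) r by (auto simp: hd_rev)
  have "hd r \<notin> ?others" "last r \<notin> ?others"
    using path_cover_hd_notin_others[OF pc assms(4)] r by simp_all
  moreover have "card {a \<in> hd ` C. leaf E a} = card {a \<in> hd ` insert (rev r) (C - {r}). leaf E a}"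
    using iso_unique_zf_card_leaves[OF g assms(2)] tree_min_zero_forcing_set_hd[OF assms(1)]
      assms(3) min_path_cover_rev[OF g assms(3,4)] by blast
  ultimately show ?thesis
    unfolding heads heads_rev using card_Collect_insert[of ?others] fin by (simp split: if_splits)
qed

lemma iso_unique_not_leaf_hd_if_end_adj_interior:
  assumes "tree V E" "iso_unique_zf V E" "min_path_cover V E P" "p \<in> P" "q \<in> P" "p \<noteq> q"
    "x = hd p \<or> x = last p" "2 \<le> length p" "E x y" "interior q y"
  shows "\<not> leaf E (hd q)"
proof -
  have g: "graph V E" using assms(1) by (rule tree_graph)
  have pc: "path_cover V E P" using assms(3) by (simp add: min_path_cover_def)
  obtain p' where p': "is_path V E p'" "set p' = set p" "last p' = x"
      "hd p' = hd p \<or> hd p' = last p"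
    using path_end_orient[OF g path_cover_is_path[OF pc assms(4)] assms(7)] .
  have "length p' = length p"
    using p'(1,2) path_cover_is_path[OF pc assms(4)] by (metis is_path_def distinct_card)
  then have "E x (p' ! (length p' - 2))" "p' ! (length p' - 2) \<in> set p"
    using is_path_last_adj[OF p'(1)] assms(8) p'(2,3) graph_symp[OF g] by (auto dest: sympD)
  moreover have "y \<notin> set p"
    using assms(10) path_cover_disjoint[OF pc assms(4-6)] by (auto simp: interior_def)
  ultimately have "\<not> leaf E x" using not_leaf_if_two_neighbours assms(9) by metis
  then have far_end: "\<not> leaf E (hd p')"
    using p'(4) assms(7) iso_unique_leaf_hd_iff_leaf_last[OF assms(1-4)] by auto
  obtain j where j: "j < length q" "q ! j = y"
    using assms(10) by (auto simp: interior_def in_set_conv_nth)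
  have "j \<noteq> 0"
  proof
    assume "j = 0"
    then show False using j assms(10) by (auto simp: interior_def hd_conv_nth)
  qed
  let ?rerouted = "p' @ drop j q"
  have "min_path_cover V E ({?rerouted, take j q} \<union> (P - {p, q}))"
    using min_path_cover_reroute[OF g assms(3-6) p'(1,2)] j \<open>j \<noteq> 0\<close> p'(3) assms(9) by simp
  then have "leaf E (hd ?rerouted) \<longleftrightarrow> leaf E (last ?rerouted)"
    using iso_unique_leaf_hd_iff_leaf_last[OF assms(1,2)] by blast
  moreover have "hd ?rerouted = hd p'" "last ?rerouted = last q"
    using is_path_nonempty[OF p'(1)] j(1) by auto
  ultimately show ?thesis
    using far_end iso_unique_leaf_hd_iff_leaf_last[OF assms(1-3,5)] by simp
qed

lemma iso_unique_no_end_interior_edge: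
  assumes "tree V E" "iso_unique_zf V E" "min_path_cover V E P" "p \<in> P" "q \<in> P" "p \<noteq> q"
    "x = hd p \<or> x = last p" "2 \<le> length p" "E x y" "interior q y"
  shows False
proof -
  have pc: "path_cover V E P" using assms(3) by (simp add: min_path_cover_def)
  define G where "G q a b \<longleftrightarrow> q \<in> P \<and> interior q a \<and> b = hd q \<and>
      (\<exists>p x. p \<in> P \<and> p \<noteq> q \<and> (x = hd p \<or> x = last p) \<and> 2 \<le> length p \<and> E x a)" for q a b
  show False
  proof (rule tree_path_cover_no_zigzag[OF assms(1) pc])
    fix q a b assume "G q a b"
    then show "q \<in> P \<and> a \<in> set q \<and> b \<in> set q \<and> a \<noteq> b"
      unfolding G_def interior_def by (auto intro: hd_in_set)
  next
    fix q a b assume "G q a b"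
    then obtain p x where q: "q \<in> P" "interior q a" "b = hd q"
      and p: "p \<in> P" "p \<noteq> q" "x = hd p \<or> x = last p" "2 \<le> length p" "E x a"
      unfolding G_def by blast
    have "q \<noteq> [a]" using q(2) by (auto simp: interior_def)
    then have "2 \<le> length q" using q(2) length_ge_2_if_not_singleton[of a q] by (simp add: interior_def)
    then have "E (q ! 0) (q ! Suc 0)" "hd q = q ! 0"
      using path_cover_is_path[OF pc q(1)] is_walk_iff_nth[of E q]
      by (auto simp: is_path_def hd_conv_nth)
    then have "E (hd q) (q ! 1)" by simp
    then obtain w where w: "E (hd q) w" "w \<noteq> q ! 1"
      using other_neighbour_if_not_leaf
        iso_unique_not_leaf_hd_if_end_adj_interior[OF assms(1-3) p(1) q(1) p(2-5) q(2)]
      by metis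
    obtain r where r: "r \<in> P" "r \<noteq> q" "interior r w"
      using min_path_cover_extra_neighbour_of_hd[OF assms(1,3) q(1) \<open>2 \<le> length q\<close> w] .
    then have "G r w (hd r)" unfolding G_def using q(1) \<open>2 \<le> length q\<close> w(1) by blast
    then show "\<exists>r' a' b'. G r' a' b' \<and> r' \<noteq> q \<and> E b a'" using r(2) w(1) q(3) by blast
  next
    show "G q y (hd q)" unfolding G_def using assms(4-10) by blast
  qed
qed

lemma iso_unique_end_interior_edge_singleton:
  assumes "tree V E" "iso_unique_zf V E" "min_path_cover V E P" "p \<in> P" "q \<in> P" "p \<noteq> q"
    "x \<in> set p" "\<not> interior p x" "E x y" "interior q y"
  shows "p = [x]"
proof (rule ccontr)
  assume "p \<noteq> [x]"
  then have "2 \<le> length p" using length_ge_2_if_not_singleton[OF assms(7)] by blast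
  moreover have "x = hd p \<or> x = last p" using assms(7,8) by (simp add: interior_def)
  ultimately show False
    using iso_unique_no_end_interior_edge[OF assms(1-6) _ _ assms(9,10)] by blast
qed

theorem lemma3p7:
  fixes V :: "'a set" and E :: "'a \<Rightarrow> 'a \<Rightarrow> bool" and P :: "'a list set"
  assumes "tree V E" and "iso_unique_zf V E" and "min_path_cover V E P"
    and "p \<in> P" and "q \<in> P" and "p \<noteq> q"
    and "x \<in> set p" and "y \<in> set q" and "E x y"
  shows "(interior p x \<and> interior q y)
       \<or> (interior p x \<and> q = [y])
       \<or> (interior q y \<and> p = [x])"
proof (cases "interior p x"; cases "interior q y")
  assume "interior p x" "interior q y"
  then show ?thesis by simp
next
  assume "interior p x" "\<not> interior q y"
  moreover have "E y x" using assms(1,9) graph_symp[OF tree_graph] by (blast dest: sympD)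
  ultimately have "q = [y]"
    using iso_unique_end_interior_edge_singleton[OF assms(1-3,5,4) assms(6)[symmetric] assms(8)]
    by blast
  with \<open>interior p x\<close> show ?thesis by simp
next
  assume "\<not> interior p x" "interior q y"
  then have "p = [x]"
    using iso_unique_end_interior_edge_singleton[OF assms(1-7) _ assms(9)] by blast
  with \<open>interior q y\<close> show ?thesis by simp
next
  assume "\<not> interior p x" "\<not> interior q y"
  then show ?thesis
    using min_path_cover_no_end_edge[OF tree_graph[OF assms(1)] assms(3-6) _ _ assms(9)] assms(7,8)
    by (simp add: interior_def)
qed

end
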